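(* Let $d\ge 1$, $\varepsilon>0$, let $Q_k,R_k\in\mathbb{R}^{d\times d}$ be symmetric positive definite matrices and $x_k^*\in\mathbb{R}^d$. Define for $x,y\in\mathbb{R}^d$ $$r_k(x,y)=\exp\Big(-\tfrac{1}{\varepsilon}\Big[\tfrac12 (x-x_k^* )^T Q_k (x-x_k^* )+\tfrac12 (y-x)^T R_k (y-x)\Big]\Big).$$ Let $P_{k+1}^{\ominus}\in\mathbb{R}^{d\times d}$ be symmetric positive definite, $\alpha_{k+1}^{\ominus}\in\mathbb{R}^d$, and $\phi_{k+1}^{\ominus}(y)=\mathcal{N}(y\mid \alpha_{k+1}^{\ominus},(P_{k+1}^{\ominus})^{-1})$. Then the function $$\phi_k^{\ominus}(x)=\int_{\mathbb{R}^d} r_k(x,y)\,\phi_{k+1}^{\ominus}(y)\,dy$$ is, up to a positive multiplicative constant, the Gaussian density $\mathcal{N}(x\mid \alpha_k^{\ominus},(P_k^{\ominus})^{-1})$, where $$P_k^{\ominus}=Q_k/\varepsilon+\big(\varepsilon R_k^{-1}+(P_{k+1}^{\ominus})^{-1}\big)^{-1}=Q_k/\varepsilon+P_{k+1}^{\ominus}-P_{k+1}^{\ominus}\big(R_k/\varepsilon+P_{k+1}^{\ominus}\big)^{-1}P_{k+1}^{\ominus},$$ $$\alpha_k^{\ominus}=(P_k^{\ominus})^{-1}\Big(\tfrac{1}{\varepsilon}Q_k x_k^*+\big(\varepsilon R_k^{-1}+(P_{k+1}^{\ominus})^{-1}\big)^{-1}\alpha_{k+1}^{\ominus}\Big)=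\alpha_{k+1}^{\ominus}+(P_k^{\ominus})^{-1}\tfrac{1}{\varepsilon}Q_k\,(x_k^*-\alpha_{k+1}^{\ominus}).$$
   Context: $\mathcal{N}(x\mid\mu,\Sigma)$ denotes the Gaussian density on $\mathbb{R}^d$ with mean $\mu$ and covariance $\Sigma$. The function $r_k$ is the (unnormalized) pairwise reference measure $\exp(-\ell_k/\varepsilon)$ associated with the LQR transition cost $\ell_k(x_k,x_{k+1})=\frac12(x_k-x_k^* )^TQ_k(x_k-x_k^* )+\frac12(x_{k+1}-x_k)^TR_k(x_{k+1}-x_k)$, and $\phi^{\ominus}_k$ is the backward-propagated Gibbs potential of the Schrödinger system. *)

theory Defs
  imports "HOL-Analysis.Analysis"
begin

definition spd :: "real^'n^'n \<Rightarrow> bool" where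
  "spd A \<longleftrightarrow> transpose A = A \<and> (\<forall>x. x \<noteq> 0 \<longrightarrow> x \<bullet> (A *v x) > 0)"

definition gauss_dens :: "real^'n \<Rightarrow> real^'n^'n \<Rightarrow> real^'n \<Rightarrow> real" where
  "gauss_dens mu S x =
     exp (-(1/2) * ((x - mu) \<bullet> (matrix_inv S *v (x - mu))))
     / sqrt ((2 * pi) ^ CARD('n) * det S)"

definition lqr_ref :: "real \<Rightarrow> real^'n^'n \<Rightarrow> real^'n^'n \<Rightarrow> real^'n \<Rightarrow> real^'n \<Rightarrow> real^'n \<Rightarrow> real" where
  "lqr_ref eps Q R xs x y =
     exp (-(1/eps) * ((1/2) * ((x - xs) \<bullet> (Q *v (x - xs))) + (1/2) * ((y - x) \<bullet> (R *v (y - x)))))"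

end

theory Submission
  imports Defs "HOL-Probability.Distributions"
begin

(* Up to the factor -1/2, the exponent of r_k(x,y) phi(y) is a sum of three quadratic forms:
   Q/eps centred at x_k^*, R/eps in y - x, and P_{k+1} centred at alpha_{k+1}.  Completing the
   square in y leaves a Gaussian kernel in y with precision R/eps + P_{k+1} and an x-dependent
   mean, plus a quadratic form in x - alpha_{k+1} whose matrix is the parallel sum
   (R/eps) (R/eps + P_{k+1})^-1 P_{k+1} = (eps R^-1 + P_{k+1}^-1)^-1.  By translation invariance
   of Lebesgue measure the y-integral of the kernel does not depend on x, and completing the square
   once more, now in x, yields the Gaussian with precision P_k and mean alpha_k times a constant. *)

lemma matrix_inv_right:
  fixes A :: "'a::field^'n^'n"
  assumes "invertible A"
  shows "A ** matrix_inv A = mat 1"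
  using someI_ex[OF assms[unfolded invertible_def]] unfolding matrix_inv_def by auto

lemma matrix_inv_left:
  fixes A :: "'a::field^'n^'n"
  assumes "invertible A"
  shows "matrix_inv A ** A = mat 1"
  using someI_ex[OF assms[unfolded invertible_def]] unfolding matrix_inv_def by auto

lemma matrix_inv_unique:
  fixes A B :: "'a::field^'n^'n"
  assumes "A ** B = mat 1"
  shows "matrix_inv A = B"
proof -
  have "invertible A"
    using assms invertible_right_inverse by blast
  then have "matrix_inv A = matrix_inv A ** (A ** B)"
    using assms by simp
  also have "\<dots> = B"
    by (simp add: matrix_mul_assoc matrix_inv_left[OF \<open>invertible A\<close>])
  finally show ?thesis .
qed

lemma matrix_inv_matrix_inv:
  fixes A :: "'a::field^'n^'n"
  assumes "invertible A"
  shows "matrix_inv (matrix_inv A) = A"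
  by (rule matrix_inv_unique[OF matrix_inv_left[OF assms]])

lemma matrix_inv_cancel:
  fixes A :: "'a::field^'n^'n"
  assumes "invertible A"
  shows "A *v (matrix_inv A *v x) = x" and "matrix_inv A *v (A *v x) = x"
  by (simp_all add: matrix_vector_mul_assoc matrix_inv_right[OF assms] matrix_inv_left[OF assms])

lemma matrix_inv_transpose:
  fixes A :: "'a::field^'n^'n"
  assumes "invertible A"
  shows "matrix_inv (transpose A) = transpose (matrix_inv A)"
  by (metis matrix_inv_unique matrix_transpose_mul matrix_inv_left[OF assms] transpose_mat)

lemma matrix_inv_scaleR:
  fixes A :: "real^'n^'n"
  assumes "invertible A" and "c \<noteq> 0"
  shows "matrix_inv (c *\<^sub>R A) = (1/c) *\<^sub>R matrix_inv A"
  by (rule matrix_inv_unique)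
    (simp add: assms matrix_scalar_ac scalar_matrix_assoc[symmetric] matrix_inv_right)

lemma matrix_inv_add_matrix_inv:
  fixes S T :: "'a::field^'n^'n"
  assumes S: "invertible S" and T: "invertible T" and B: "invertible (S + T)"
  shows "matrix_inv (matrix_inv S + matrix_inv T) = S ** matrix_inv (S + T) ** T"
proof (rule matrix_inv_unique, rule iffD2[OF matrix_eq], intro allI)
  fix v
  define w where "w = matrix_inv (S + T) *v (T *v v)"
  have "S *v w + T *v w = T *v v"
    using matrix_inv_cancel(1)[OF B] by (simp add: w_def matrix_vector_mult_add_rdistrib)
  then have Sw: "S *v w = T *v v - T *v w"
    by (simp add: algebra_simps)
  have "(matrix_inv S + matrix_inv T) ** (S ** matrix_inv (S + T) ** T) *v v
      = matrix_inv S *v (S *v w) + matrix_inv T *v (S *v w)"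
    by (simp add: w_def matrix_vector_mul_assoc[symmetric] matrix_vector_mult_add_rdistrib)
  also have "\<dots> = w + (v - w)"
    using matrix_inv_cancel(2)[OF S, of w] matrix_inv_cancel(2)[OF T]
    by (simp add: Sw matrix_vector_mult_diff_distrib)
  also have "\<dots> = mat 1 *v v"
    by simp
  finally show "(matrix_inv S + matrix_inv T) ** (S ** matrix_inv (S + T) ** T) *v v = mat 1 *v v" .
qed

lemma matrix_mul_inv_add_eq:
  fixes S T :: "'a::field^'n^'n"
  assumes "invertible (S + T)"
  shows "S ** matrix_inv (S + T) ** T = T - T ** matrix_inv (S + T) ** T"
proof (rule iffD2[OF matrix_eq], intro allI)
  fix v
  define w where "w = matrix_inv (S + T) *v (T *v v)"
  have "S *v w + T *v w = T *v v"
    using matrix_inv_cancel(1)[OF assms] by (simp add: w_def matrix_vector_mult_add_rdistrib)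
  then show "S ** matrix_inv (S + T) ** T *v v = (T - T ** matrix_inv (S + T) ** T) *v v"
    by (simp add: w_def matrix_vector_mul_assoc[symmetric] algebra_simps)
qed

lemma inner_matrix_vector_symmetric:
  fixes A :: "real^'n^'n"
  assumes "transpose A = A"
  shows "x \<bullet> (A *v y) = y \<bullet> (A *v x)"
  by (metis assms dot_lmul_matrix inner_commute vector_transpose_matrix)

lemma quadratic_form_add:
  fixes S :: "real^'n^'n"
  assumes "transpose S = S"
  shows "(a + b) \<bullet> (S *v (a + b)) = a \<bullet> (S *v a) + 2 * (a \<bullet> (S *v b)) + b \<bullet> (S *v b)"
  using inner_matrix_vector_symmetric[OF assms, of b a]
  by (simp add: matrix_vector_right_distrib inner_add_left inner_add_right)

lemma quadratic_form_complete_square: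
  fixes S T :: "real^'n^'n" and z u v :: "real^'n"
  assumes S: "transpose S = S" and T: "transpose T = T" and B: "invertible (S + T)"
  defines "w \<equiv> matrix_inv (S + T) *v (S *v u + T *v v)"
  shows "(z - u) \<bullet> (S *v (z - u)) + (z - v) \<bullet> (T *v (z - v))
       = (z - w) \<bullet> ((S + T) *v (z - w)) + (u - v) \<bullet> ((S ** matrix_inv (S + T) ** T) *v (u - v))"
proof -
  define h where "h = z - w"
  define g where "g = S *v (w - u)"
  have Bw: "(S + T) *v w = S *v u + T *v v"
    unfolding w_def by (rule matrix_inv_cancel(1)[OF B])
  then have g_T: "T *v (w - v) = - g"
    by (simp add: g_def algebra_simps)
  have "(S + T) *v (w - u) = T *v (v - u)"
    using Bw by (simp add: algebra_simps)
  then have g_eq: "g = (S ** matrix_inv (S + T) ** T) *v (v - u)"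
    unfolding g_def by (metis matrix_inv_cancel(2)[OF B] matrix_vector_mul_assoc)
  have const: "(w - u) \<bullet> g - (w - v) \<bullet> g = (u - v) \<bullet> ((S ** matrix_inv (S + T) ** T) *v (u - v))"
    unfolding g_eq by (simp add: algebra_simps inner_diff_left inner_diff_right)
  have "z - u = h + (w - u)" and "z - v = h + (w - v)"
    by (simp_all add: h_def)
  then have "(z - u) \<bullet> (S *v (z - u)) + (z - v) \<bullet> (T *v (z - v))
      = h \<bullet> ((S + T) *v h) + 2 * (h \<bullet> (g + T *v (w - v))) + ((w - u) \<bullet> g + (w - v) \<bullet> (T *v (w - v)))"
    using quadratic_form_add[OF S, of h "w - u"] quadratic_form_add[OF T, of h "w - v"]
    by (simp add: g_def matrix_vector_mult_add_rdistrib inner_add_right algebra_simps)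
  also have "\<dots> = h \<bullet> ((S + T) *v h) + ((w - u) \<bullet> g - (w - v) \<bullet> g)"
    by (simp add: g_T)
  finally show ?thesis
    by (simp only: const h_def)
qed

lemma spd_symmetric: "spd A \<Longrightarrow> transpose A = A"
  unfolding spd_def by blast

lemma spd_invertible:
  fixes A :: "real^'n^'n"
  assumes "spd A"
  shows "invertible A"
proof -
  have "inj ((*v) A)"
  proof (rule injI)
    fix x y
    assume "A *v x = A *v y"
    then have "(x - y) \<bullet> (A *v (x - y)) = 0"
      by (simp add: matrix_vector_mult_diff_distrib)
    then show "x = y"
      using assms unfolding spd_def by (metis less_irrefl right_minus_eq)
  qed
  then show ?thesis
    using matrix_left_invertible_injective invertible_left_inverse by blast
qed

lemma spd_matrix_inv:
  fixes A :: "real^'n^'n"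
  assumes "spd A"
  shows "spd (matrix_inv A)"
  unfolding spd_def
proof (intro conjI allI impI)
  have "invertible A"
    using spd_invertible[OF assms] .
  then show "transpose (matrix_inv A) = matrix_inv A"
    using matrix_inv_transpose spd_symmetric[OF assms] by metis
  fix x :: "real^'n"
  assume "x \<noteq> 0"
  define z where "z = matrix_inv A *v x"
  have Az: "A *v z = x"
    unfolding z_def by (rule matrix_inv_cancel(1)[OF \<open>invertible A\<close>])
  then have "z \<noteq> 0"
    using \<open>x \<noteq> 0\<close> by auto
  then have "z \<bullet> (A *v z) > 0"
    using assms unfolding spd_def by blast
  then show "x \<bullet> (matrix_inv A *v x) > 0"
    using Az by (simp add: z_def inner_commute)
qed

lemma spd_add:
  fixes A B :: "real^'n^'n"
  assumes "spd A" and "spd B"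
  shows "spd (A + B)"
  using assms unfolding spd_def
  by (auto simp: transpose_def vec_eq_iff matrix_vector_mult_add_rdistrib inner_add_right add_pos_pos)

lemma spd_scaleR:
  fixes A :: "real^'n^'n"
  assumes "spd A" and "c > 0"
  shows "spd (c *\<^sub>R A)"
  using assms unfolding spd_def
  by (auto simp: transpose_def vec_eq_iff scaleR_matrix_vector_assoc[symmetric])

lemma spd_convex_combination_mat_1:
  fixes A :: "real^'n^'n"
  assumes "spd A" and "0 \<le> t" and "t \<le> 1"
  shows "spd ((1 - t) *\<^sub>R mat 1 + t *\<^sub>R A)"
proof (cases "t = 1")
  case False
  have "spd ((1 - t) *\<^sub>R mat 1)"
    using \<open>t \<le> 1\<close> False by (intro spd_scaleR) (auto simp: spd_def)
  moreover have "spd (t *\<^sub>R A)" if "t > 0"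
    using assms that by (intro spd_scaleR)
  ultimately show ?thesis
    using \<open>0 \<le> t\<close> by (cases "t = 0") (auto intro: spd_add)
qed (simp add: assms)

lemma spd_det_pos:
  fixes A :: "real^'n^'n"
  assumes "spd A"
  shows "det A > 0"
proof (rule ccontr)
  assume "\<not> det A > 0"
  define f where "f t = det ((1 - t) *\<^sub>R mat 1 + t *\<^sub>R A)" for t :: real
  have "continuous_on {0..1} f"
    unfolding f_def det_def by (intro continuous_intros)
  then obtain t where "0 \<le> t" "t \<le> 1" "f t = 0"
    using IVT2'[of f 1 0 0] \<open>\<not> det A > 0\<close> by (auto simp: f_def)
  then show False
    using spd_convex_combination_mat_1[OF assms] spd_invertible invertible_det_nz
    unfolding f_def by metis
qed

lemma spd_coercive:
  fixes A :: "real^'n^'n"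
  assumes "spd A"
  obtains l where "l > 0" and "\<And>y. l * (y \<bullet> y) \<le> y \<bullet> (A *v y)"
proof -
  have cont: "continuous_on (sphere 0 1) (\<lambda>y. y \<bullet> (A *v y))"
    by (intro continuous_intros linear_continuous_on matrix_vector_mul_linear_gen)
  have "sphere (0::real^'n) 1 \<noteq> {}"
    by simp
  then obtain x0 where x0: "x0 \<in> sphere 0 1"
    and min: "\<And>y. y \<in> sphere 0 1 \<Longrightarrow> x0 \<bullet> (A *v x0) \<le> y \<bullet> (A *v y)"
    using continuous_attains_inf[OF compact_sphere _ cont] by blast
  have "x0 \<noteq> 0"
    using x0 by auto
  then have pos: "x0 \<bullet> (A *v x0) > 0"
    using assms unfolding spd_def by blast
  have "x0 \<bullet> (A *v x0) * (y \<bullet> y) \<le> y \<bullet> (A *v y)" for y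
  proof (cases "y = 0")
    case False
    have "x0 \<bullet> (A *v x0) \<le> (y /\<^sub>R norm y) \<bullet> (A *v (y /\<^sub>R norm y))"
      using False by (intro min) simp
    also have "\<dots> = (y \<bullet> (A *v y)) / (y \<bullet> y)"
      by (simp add: matrix_vector_mult_scaleR power2_eq_square field_simps flip: power2_norm_eq_inner)
    finally show ?thesis
      using False by (simp add: pos_le_divide_eq)
  qed simp
  then show ?thesis
    using pos that by blast
qed

lemma integrable_exp_neg_square:
  fixes c :: real
  assumes "c > 0"
  shows "integrable lborel (\<lambda>t::real. exp (- c * t\<^sup>2))"
proof -
  define s where "s = sqrt (1 / (2 * c))"
  have "s > 0" and "s\<^sup>2 = 1 / (2 * c)"
    using assms by (simp_all add: s_def)
  then have "exp (- c * t\<^sup>2) = sqrt (2 * pi * s\<^sup>2) * normal_density 0 s t" for t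
    using assms by (simp add: normal_density_def)
  then show ?thesis
    using integrable_normal_density[OF \<open>s > 0\<close>] by (simp add: integrable_mult_right)
qed

lemma integrable_exp_neg_inner:
  fixes c :: real
  assumes "c > 0"
  shows "integrable lborel (\<lambda>y::'a::euclidean_space. exp (- c * (y \<bullet> y)))"
proof (subst integrable_iff_bounded, intro conjI)
  show "(\<lambda>y::'a. exp (- c * (y \<bullet> y))) \<in> borel_measurable lborel"
    by measurable
  have factor: "ennreal (exp (- c * (y \<bullet> y))) = (\<Prod>b\<in>Basis. ennreal (exp (- c * (y \<bullet> b)\<^sup>2)))" for y :: 'a
    by (simp add: euclidean_inner[of y y] sum_distrib_left exp_sum[symmetric] power2_eq_square
        sum_negf prod_ennreal)
  have "(\<integral>\<^sup>+t. ennreal (exp (- c * t\<^sup>2)) \<partial>lborel) < \<infinity>"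
    using integrable_exp_neg_square[OF assms] by (simp add: integrable_iff_bounded)
  moreover have "(\<integral>\<^sup>+y. ennreal (exp (- c * (y \<bullet> y))) \<partial>(lborel::'a measure))
      = (\<Prod>b\<in>(Basis::'a set). \<integral>\<^sup>+t. ennreal (exp (- c * t\<^sup>2)) \<partial>lborel)"
    unfolding factor by (rule nn_integral_lborel_prod) auto
  ultimately show "(\<integral>\<^sup>+y. ennreal (norm (exp (- c * (y \<bullet> y)))) \<partial>(lborel::'a measure)) < \<infinity>"
    by (simp add: power_less_top_ennreal)
qed

definition gauss_kernel :: "real^'n^'n \<Rightarrow> real^'n \<Rightarrow> real" where
  "gauss_kernel A y = exp (- (1/2) * (y \<bullet> (A *v y)))"

lemma borel_measurable_gauss_kernel [measurable]: "gauss_kernel A \<in> borel_measurable borel"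
  unfolding gauss_kernel_def
  by (intro borel_measurable_continuous_onI continuous_intros linear_continuous_on
      matrix_vector_mul_linear_gen)

lemma integrable_gauss_kernel:
  fixes A :: "real^'n^'n"
  assumes "spd A"
  shows "integrable lborel (gauss_kernel A)"
proof -
  obtain l where "l > 0" and l: "\<And>y. l * (y \<bullet> y) \<le> y \<bullet> (A *v y)"
    using spd_coercive[OF assms] by blast
  have "integrable lborel (\<lambda>y::real^'n. exp (- (l/2) * (y \<bullet> y)))"
    by (rule integrable_exp_neg_inner) (use \<open>l > 0\<close> in simp)
  then show ?thesis
    by (rule Bochner_Integration.integrable_bound) (auto simp: gauss_kernel_def l)
qed

lemma integral_gauss_kernel_pos:
  fixes A :: "real^'n^'n"
  assumes "spd A"
  shows "(\<integral>y. gauss_kernel A y \<partial>lborel) > 0"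
proof -
  have int: "integrable lborel (gauss_kernel A)"
    using integrable_gauss_kernel[OF assms] .
  have "(\<integral>y. gauss_kernel A y \<partial>lborel) \<noteq> 0"
  proof
    assume "(\<integral>y. gauss_kernel A y \<partial>lborel) = 0"
    moreover have "AE y in lborel. 0 \<le> gauss_kernel A y"
      by (simp add: gauss_kernel_def)
    ultimately have "AE y in lborel. gauss_kernel A y = 0"
      using integral_nonneg_eq_0_iff_AE[OF int] by simp
    then have "AE y in (lborel :: (real^'n) measure). False"
      by (simp add: gauss_kernel_def)
    then show False
      by (subst (asm) AE_iff_measurable[of UNIV]) auto
  qed
  moreover have "(\<integral>y. gauss_kernel A y \<partial>lborel) \<ge> 0"
    by (simp add: gauss_kernel_def)
  ultimately show ?thesis
    by linarith
qed

lemma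
  fixes g :: "'a::euclidean_space \<Rightarrow> 'b::{banach, second_countable_topology}"
  assumes [measurable]: "g \<in> borel_measurable borel"
  shows integrable_lborel_translate: "integrable lborel (\<lambda>y. g (y - m)) \<longleftrightarrow> integrable lborel g"
    and integral_lborel_translate: "(\<integral>y. g (y - m) \<partial>lborel) = (\<integral>y. g y \<partial>lborel)"
proof -
  have "integrable lborel g \<longleftrightarrow> integrable (distr lborel borel ((+) (- m))) g"
    by (simp only: lborel_distr_plus)
  also have "\<dots> \<longleftrightarrow> integrable lborel (\<lambda>y. g (- m + y))"
    by (rule integrable_distr_eq) auto
  finally show "integrable lborel (\<lambda>y. g (y - m)) \<longleftrightarrow> integrable lborel g"
    by simp
  have "(\<integral>y. g y \<partial>lborel) = (\<integral>y. g y \<partial>(distr lborel borel ((+) (- m))))"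
    by (simp only: lborel_distr_plus)
  also have "\<dots> = (\<integral>y. g (- m + y) \<partial>lborel)"
    by (rule integral_distr) auto
  finally show "(\<integral>y. g (y - m) \<partial>lborel) = (\<integral>y. g y \<partial>lborel)"
    by simp
qed

lemma gauss_dens_matrix_inv:
  fixes P :: "real^'n^'n"
  assumes "invertible P"
  shows "gauss_dens a (matrix_inv P) x
       = gauss_kernel P (x - a) / sqrt ((2 * pi) ^ CARD('n) * det (matrix_inv P))"
  by (simp add: gauss_dens_def gauss_kernel_def matrix_inv_matrix_inv[OF assms])

lemma gauss_dens_normalizer_pos:
  fixes P :: "real^'n^'n"
  assumes "spd P"
  shows "sqrt ((2 * pi) ^ CARD('n) * det (matrix_inv P)) > 0"
  using spd_det_pos[OF spd_matrix_inv[OF assms]] by simp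

lemma lqr_backward_precision:
  fixes eps :: real and R P :: "real^'n^'n"
  assumes "eps > 0" and "spd R" and "spd P"
  shows "matrix_inv (eps *\<^sub>R matrix_inv R + matrix_inv P)
       = (1/eps) *\<^sub>R R ** matrix_inv ((1/eps) *\<^sub>R R + P) ** P"
    and "spd (matrix_inv (eps *\<^sub>R matrix_inv R + matrix_inv P))"
proof -
  have "spd ((1/eps) *\<^sub>R R)"
    using assms by (intro spd_scaleR) simp_all
  then have "matrix_inv ((1/eps) *\<^sub>R R) = eps *\<^sub>R matrix_inv R"
    using assms by (simp add: matrix_inv_scaleR spd_invertible)
  then show "matrix_inv (eps *\<^sub>R matrix_inv R + matrix_inv P)
       = (1/eps) *\<^sub>R R ** matrix_inv ((1/eps) *\<^sub>R R + P) ** P"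
    using matrix_inv_add_matrix_inv \<open>spd ((1/eps) *\<^sub>R R)\<close> assms(3) spd_add spd_invertible
    by metis
  show "spd (matrix_inv (eps *\<^sub>R matrix_inv R + matrix_inv P))"
    using assms by (intro spd_matrix_inv spd_add spd_scaleR) simp_all
qed

lemma lqr_exponent_complete_square:
  fixes Q R P M :: "real^'n^'n" and x y xs a :: "real^'n"
  assumes "transpose Q = Q" and "transpose R = R" and "transpose P = P" and "transpose M = M"
    and "invertible (R + P)" and "invertible (Q + M)"
    and M: "M = R ** matrix_inv (R + P) ** P"
  shows "(x - xs) \<bullet> (Q *v (x - xs)) + (y - x) \<bullet> (R *v (y - x)) + (y - a) \<bullet> (P *v (y - a))
       = (y - matrix_inv (R + P) *v (R *v x + P *v a))
           \<bullet> ((R + P) *v (y - matrix_inv (R + P) *v (R *v x + P *v a)))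
         + (x - matrix_inv (Q + M) *v (Q *v xs + M *v a))
           \<bullet> ((Q + M) *v (x - matrix_inv (Q + M) *v (Q *v xs + M *v a)))
         + (xs - a) \<bullet> ((Q ** matrix_inv (Q + M) ** M) *v (xs - a))"
proof -
  have "(y - x) \<bullet> (R *v (y - x)) + (y - a) \<bullet> (P *v (y - a))
      = (y - matrix_inv (R + P) *v (R *v x + P *v a))
          \<bullet> ((R + P) *v (y - matrix_inv (R + P) *v (R *v x + P *v a)))
        + (x - a) \<bullet> (M *v (x - a))"
    unfolding M by (rule quadratic_form_complete_square) fact+
  moreover have "(x - xs) \<bullet> (Q *v (x - xs)) + (x - a) \<bullet> (M *v (x - a))
      = (x - matrix_inv (Q + M) *v (Q *v xs + M *v a))
          \<bullet> ((Q + M) *v (x - matrix_inv (Q + M) *v (Q *v xs + M *v a)))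
        + (xs - a) \<bullet> ((Q ** matrix_inv (Q + M) ** M) *v (xs - a))"
    by (rule quadratic_form_complete_square) fact+
  ultimately show ?thesis
    by linarith
qed

lemma lqr_ref_mult_gauss_dens:
  fixes eps :: real and Q R P :: "real^'n^'n" and x y xs a :: "real^'n"
  assumes "invertible P"
  shows "lqr_ref eps Q R xs x y * gauss_dens a (matrix_inv P) y
       = exp (- (1/2) * ((x - xs) \<bullet> (((1/eps) *\<^sub>R Q) *v (x - xs))
                         + (y - x) \<bullet> (((1/eps) *\<^sub>R R) *v (y - x)) + (y - a) \<bullet> (P *v (y - a))))
         / sqrt ((2 * pi) ^ CARD('n) * det (matrix_inv P))"
  unfolding lqr_ref_def gauss_dens_matrix_inv[OF assms] gauss_kernel_def
  by (simp add: exp_add[symmetric] scaleR_matrix_vector_assoc[symmetric] algebra_simps)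

lemma lqr_ref_mult_gauss_dens_factor:
  fixes eps :: real and Q R P Pk :: "real^'n^'n" and xs a ak :: "real^'n"
  assumes "eps > 0" and "spd Q" and "spd R" and "spd P"
    and Pk: "Pk = (1/eps) *\<^sub>R Q + matrix_inv (eps *\<^sub>R matrix_inv R + matrix_inv P)"
    and ak: "ak = matrix_inv Pk *v ((1/eps) *\<^sub>R (Q *v xs) + matrix_inv (eps *\<^sub>R matrix_inv R + matrix_inv P) *v a)"
  obtains B c m where "spd B" and "c > 0"
    and "\<And>x y. lqr_ref eps Q R xs x y * gauss_dens a (matrix_inv P) y
              = c * gauss_kernel B (y - m x) * gauss_dens ak (matrix_inv Pk) x"
proof -
  define Rt where "Rt = (1/eps) *\<^sub>R R"
  define Qt where "Qt = (1/eps) *\<^sub>R Q"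
  define M where "M = matrix_inv (eps *\<^sub>R matrix_inv R + matrix_inv P)"
  have M_eq: "M = Rt ** matrix_inv (Rt + P) ** P" and "spd M"
    using lqr_backward_precision[OF \<open>eps > 0\<close> \<open>spd R\<close> \<open>spd P\<close>] by (simp_all add: M_def Rt_def)
  have "spd Qt" and "spd Rt"
    using assms by (simp_all add: Qt_def Rt_def spd_scaleR)
  then have "spd (Rt + P)" and "spd Pk"
    using \<open>spd P\<close> \<open>spd M\<close> by (simp_all add: Pk Qt_def M_def spd_add)
  have Pk_eq: "Pk = Qt + M" and ak_eq: "ak = matrix_inv (Qt + M) *v (Qt *v xs + M *v a)"
    by (simp_all add: ak Pk Qt_def M_def scaleR_matrix_vector_assoc)
  define m where "m x = matrix_inv (Rt + P) *v (Rt *v x + P *v a)" for x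
  define c0 where "c0 = (xs - a) \<bullet> ((Qt ** matrix_inv Pk ** M) *v (xs - a))"
  define D1 where "D1 = sqrt ((2 * pi) ^ CARD('n) * det (matrix_inv P))"
  define Dk where "Dk = sqrt ((2 * pi) ^ CARD('n) * det (matrix_inv Pk))"
  have "D1 > 0" and "Dk > 0"
    unfolding D1_def Dk_def using gauss_dens_normalizer_pos \<open>spd P\<close> \<open>spd Pk\<close> by blast+
  show ?thesis
  proof
    show "spd (Rt + P)" by fact
    show "exp (- c0 / 2) * Dk / D1 > 0"
      using \<open>D1 > 0\<close> \<open>Dk > 0\<close> by simp
    fix x y
    have "(x - xs) \<bullet> (Qt *v (x - xs)) + (y - x) \<bullet> (Rt *v (y - x)) + (y - a) \<bullet> (P *v (y - a))
        = (y - m x) \<bullet> ((Rt + P) *v (y - m x)) + (x - ak) \<bullet> (Pk *v (x - ak)) + c0"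
      unfolding m_def c0_def ak_eq Pk_eq
      using \<open>spd Qt\<close> \<open>spd Rt\<close> \<open>spd P\<close> \<open>spd M\<close> \<open>spd (Rt + P)\<close> \<open>spd Pk\<close>
      by (intro lqr_exponent_complete_square M_eq) (simp_all add: Pk_eq spd_symmetric spd_invertible)
    then have "lqr_ref eps Q R xs x y * gauss_dens a (matrix_inv P) y
        = exp (- c0 / 2 + - (1/2) * ((y - m x) \<bullet> ((Rt + P) *v (y - m x)))
            + - (1/2) * ((x - ak) \<bullet> (Pk *v (x - ak)))) / D1"
      unfolding lqr_ref_mult_gauss_dens[OF spd_invertible, OF \<open>spd P\<close>] D1_def[symmetric]
        Qt_def[symmetric] Rt_def[symmetric]
      by (simp add: algebra_simps)
    also have "\<dots> = exp (- c0 / 2) * Dk / D1 * gauss_kernel (Rt + P) (y - m x) * gauss_dens ak (matrix_inv Pk) x"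
      unfolding gauss_dens_matrix_inv[OF spd_invertible, OF \<open>spd Pk\<close>] Dk_def[symmetric]
        gauss_kernel_def exp_add
      using \<open>Dk > 0\<close> by simp
    finally show "lqr_ref eps Q R xs x y * gauss_dens a (matrix_inv P) y
        = exp (- c0 / 2) * Dk / D1 * gauss_kernel (Rt + P) (y - m x) * gauss_dens ak (matrix_inv Pk) x" .
  qed
qed

lemma lqr_backward_update_closed_form:
  fixes eps :: real and Q R P1 Pk :: "real^'n^'n" and xs a1 ak :: "real^'n"
  assumes "eps > 0" and "spd Q" and "spd R" and "spd P1"
    and Pk_def: "Pk = (1/eps) *\<^sub>R Q + matrix_inv (eps *\<^sub>R matrix_inv R + matrix_inv P1)"
    and ak_def: "ak = matrix_inv Pk *v ((1/eps) *\<^sub>R (Q *v xs) + matrix_inv (eps *\<^sub>R matrix_inv R + matrix_inv P1) *v a1)"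
  shows "Pk = (1/eps) *\<^sub>R Q + P1 - P1 ** matrix_inv ((1/eps) *\<^sub>R R + P1) ** P1"
    and "ak = a1 + matrix_inv Pk *v ((1/eps) *\<^sub>R (Q *v (xs - a1)))"
    and "spd Pk"
proof -
  define M where "M = matrix_inv (eps *\<^sub>R matrix_inv R + matrix_inv P1)"
  have Pk_M: "Pk = (1/eps) *\<^sub>R Q + M"
    by (simp add: Pk_def M_def)
  have "invertible ((1/eps) *\<^sub>R R + P1)"
    using assms by (intro spd_invertible spd_add spd_scaleR) simp_all
  then have "M = P1 - P1 ** matrix_inv ((1/eps) *\<^sub>R R + P1) ** P1"
    using lqr_backward_precision(1)[OF assms(1,3,4)] by (simp add: M_def matrix_mul_inv_add_eq)
  then show "Pk = (1/eps) *\<^sub>R Q + P1 - P1 ** matrix_inv ((1/eps) *\<^sub>R R + P1) ** P1"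
    by (simp add: Pk_M add_diff_eq)
  show "spd Pk"
    using assms lqr_backward_precision(2)[OF assms(1,3,4)] by (simp add: Pk_M M_def spd_add spd_scaleR)
  then have "invertible Pk"
    by (rule spd_invertible)
  have "Pk *v ak = (1/eps) *\<^sub>R (Q *v xs) + M *v a1"
    using matrix_inv_cancel(1)[OF \<open>invertible Pk\<close>] by (simp add: ak_def M_def)
  also have "\<dots> = Pk *v a1 + (1/eps) *\<^sub>R (Q *v (xs - a1))"
    by (simp add: Pk_M algebra_simps scaleR_matrix_vector_assoc[symmetric])
  finally show "ak = a1 + matrix_inv Pk *v ((1/eps) *\<^sub>R (Q *v (xs - a1)))"
    by (metis matrix_inv_cancel(2)[OF \<open>invertible Pk\<close>] matrix_vector_right_distrib)
qed

theorem mainTheorem1: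
  fixes eps :: real
    and Q R P1 :: "real^'n^'n"
    and xs a1 ak :: "real^'n"
    and Pk :: "real^'n^'n"
  assumes "eps > 0"
    and "spd Q" and "spd R" and "spd P1"
  assumes Pk_def: "Pk = (1/eps) *\<^sub>R Q + matrix_inv (eps *\<^sub>R matrix_inv R + matrix_inv P1)"
    and ak_def: "ak = matrix_inv Pk *v ((1/eps) *\<^sub>R (Q *v xs) + matrix_inv (eps *\<^sub>R matrix_inv R + matrix_inv P1) *v a1)"
  shows "Pk = (1/eps) *\<^sub>R Q + P1 - P1 ** matrix_inv ((1/eps) *\<^sub>R R + P1) ** P1
         \<and> ak = a1 + matrix_inv Pk *v ((1/eps) *\<^sub>R (Q *v (xs - a1)))
         \<and> spd Pk
         \<and> (\<forall>x. integrable lborel (\<lambda>y. lqr_ref eps Q R xs x y * gauss_dens a1 (matrix_inv P1) y))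
         \<and> (\<exists>c>0. \<forall>x. (\<integral>y. lqr_ref eps Q R xs x y * gauss_dens a1 (matrix_inv P1) y \<partial>lborel)
                  = c * gauss_dens ak (matrix_inv Pk) x)"
proof -
  obtain B c m where "spd B" "c > 0" and factor: "\<And>x y. lqr_ref eps Q R xs x y * gauss_dens a1 (matrix_inv P1) y
      = c * gauss_kernel B (y - m x) * gauss_dens ak (matrix_inv Pk) x"
    using lqr_ref_mult_gauss_dens_factor[OF assms] by metis
  have "integrable lborel (\<lambda>y. gauss_kernel B (y - m x))" for x
    using integrable_lborel_translate[OF borel_measurable_gauss_kernel] integrable_gauss_kernel[OF \<open>spd B\<close>]
    by blast
  then have "integrable lborel (\<lambda>y. lqr_ref eps Q R xs x y * gauss_dens a1 (matrix_inv P1) y)" for x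
    by (simp add: factor)
  moreover have "(\<integral>y. lqr_ref eps Q R xs x y * gauss_dens a1 (matrix_inv P1) y \<partial>lborel)
      = (c * (\<integral>y. gauss_kernel B y \<partial>lborel)) * gauss_dens ak (matrix_inv Pk) x" for x
    by (simp add: factor integral_lborel_translate)
  moreover have "c * (\<integral>y. gauss_kernel B y \<partial>lborel) > 0"
    using \<open>c > 0\<close> integral_gauss_kernel_pos[OF \<open>spd B\<close>] by simp
  ultimately show ?thesis
    using lqr_backward_update_closed_form[OF assms] by blast
qed

end
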